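(* Let $\phi$ be a propositional CNF formula and run Algorithm 1 (described in the context) on $\phi$ with an arbitrary decomposition $\psi_1,\dots,\psi_k$. If the algorithm returns $\top$, then $\phi$ is satisfiable; if it returns $\bot$, then $\phi$ is unsatisfiable.
   Context: A formula in CNF is a conjunction of clauses (disjunctions of literals); $V_\chi$ denotes the set of variables of $\chi$. Given formulas $A,B$ with $A\wedge B$ unsatisfiable, an interpolant for $\neg(A\wedge B)$ is a formula $I$ with $A\Rightarrow I$, $I\Rightarrow\neg B$, and $V_I\subseteq V_A\cap V_B$. Algorithm 1: decompose $\phi$ into formulas $\psi_1,\dots,\psi_k$, each being a conjunction of clauses of $\phi$, with $\phi\equiv\psi_1\wedge\dots\wedge\psi_k$ (no requirement that they share no variables). Let $V=\bigcup_{i\neq j}(V_{\psi_i}\cap V_{\psi_j})$ be the shared variables. Set $G:=\top$ and repeat: if $G$ is unsatisfiable, return $\bot$; otherwise pick an assignment $m$ to all variables of $V$ satisfying $G$ (viewed as a conjunction of literals). For each $i=1,\dots,k$: if $\psi_i\wedge m$ is unsatisfiable, compute an interpolant $I$ for $\neg(\psi_i\wedge m)$ (so its variables lie in $V_{\psi_i}\cap V$) and set $G:=G\wedge I$. If no $\psi_i\wedge m$ was unsatisfiable in this round, return $\top$; otherwise repeat. *)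

theory Defs
  imports Main
begin

datatype 'v form = FVar 'v | FNot "'v form" | FAnd "'v form" "'v form"
  | FOr "'v form" "'v form" | FTrue | FFalse

fun eval :: "('v \<Rightarrow> bool) \<Rightarrow> 'v form \<Rightarrow> bool" where
  "eval a (FVar v) = a v"
| "eval a (FNot f) = (\<not> eval a f)"
| "eval a (FAnd f g) = (eval a f \<and> eval a g)"
| "eval a (FOr f g) = (eval a f \<or> eval a g)"
| "eval a FTrue = True"
| "eval a FFalse = False"

fun fvars :: "'v form \<Rightarrow> 'v set" where
  "fvars (FVar v) = {v}"
| "fvars (FNot f) = fvars f"
| "fvars (FAnd f g) = fvars f \<union> fvars g"
| "fvars (FOr f g) = fvars f \<union> fvars g"
| "fvars FTrue = {}"
| "fvars FFalse = {}"

text \<open>A literal is a variable with a polarity (True = positive); a clause is a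
  disjunction of literals, a CNF is a conjunction of clauses.\<close>

type_synonym 'v clause = "('v \<times> bool) list"
type_synonym 'v cnf = "'v clause list"

definition sat_clause :: "('v \<Rightarrow> bool) \<Rightarrow> 'v clause \<Rightarrow> bool" where
  "sat_clause a c = (\<exists>(v, p) \<in> set c. a v = p)"

definition sat_cnf :: "('v \<Rightarrow> bool) \<Rightarrow> 'v cnf \<Rightarrow> bool" where
  "sat_cnf a \<phi> = (\<forall>c \<in> set \<phi>. sat_clause a c)"

definition satisfiable :: "'v cnf \<Rightarrow> bool" where
  "satisfiable \<phi> = (\<exists>a. sat_cnf a \<phi>)"

definition cvars :: "'v cnf \<Rightarrow> 'v set" where
  "cvars \<phi> = (\<Union>c \<in> set \<phi>. fst ` set c)"

definition is_decomposition :: "'v cnf \<Rightarrow> 'v cnf list \<Rightarrow> bool" where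
  "is_decomposition \<phi> \<psi>s =
     ((\<forall>i < length \<psi>s. set (\<psi>s ! i) \<subseteq> set \<phi>) \<and>
      (\<forall>a. sat_cnf a \<phi> \<longleftrightarrow> (\<forall>i < length \<psi>s. sat_cnf a (\<psi>s ! i))))"

definition shared_vars :: "'v cnf list \<Rightarrow> 'v set" where
  "shared_vars \<psi>s = (\<Union>i < length \<psi>s. \<Union>j < length \<psi>s.
       if i \<noteq> j then cvars (\<psi>s ! i) \<inter> cvars (\<psi>s ! j) else {})"

text \<open>An assignment m to the variables of V is represented by a total function,
  of which only the values on V matter. The formula \<psi> \<and> m (m read as the
  conjunction of literals over V) is unsatisfiable iff no assignment agreeing
  with m on V satisfies \<psi>.\<close>
definition unsat_with :: "'v set \<Rightarrow> 'v cnf \<Rightarrow> ('v \<Rightarrow> bool) \<Rightarrow> bool" where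
  "unsat_with V \<psi> m = (\<not> (\<exists>a. (\<forall>v \<in> V. a v = m v) \<and> sat_cnf a \<psi>))"

text \<open>I is an interpolant for \<not>(\<psi> \<and> m): \<psi> \<Rightarrow> I, I \<Rightarrow> \<not>m, and
  V_I \<subseteq> V_\<psi> \<inter> V (the variables of m are exactly V).\<close>
definition is_interpolant :: "'v set \<Rightarrow> 'v cnf \<Rightarrow> ('v \<Rightarrow> bool) \<Rightarrow> 'v form \<Rightarrow> bool" where
  "is_interpolant V \<psi> m I =
     ((\<forall>a. sat_cnf a \<psi> \<longrightarrow> eval a I) \<and>
      (\<forall>a. eval a I \<longrightarrow> \<not> (\<forall>v \<in> V. a v = m v)) \<and>
      fvars I \<subseteq> cvars \<psi> \<inter> V)"

definition round_update :: "'v cnf list \<Rightarrow> ('v \<Rightarrow> bool) \<Rightarrow> (nat \<Rightarrow> 'v form) \<Rightarrow> 'v form \<Rightarrow> 'v form" where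
  "round_update \<psi>s m I G =
     foldl (\<lambda>g i. if unsat_with (shared_vars \<psi>s) (\<psi>s ! i) m then FAnd g (I i) else g)
           G [0..<length \<psi>s]"

text \<open>alg1_run \<psi>s G r: starting the loop with current value G, some run of the
  (nondeterministic: choice of m and of interpolants) algorithm returns r,
  where r = True means \<top> and r = False means \<bottom>.\<close>
inductive alg1_run :: "'v cnf list \<Rightarrow> 'v form \<Rightarrow> bool \<Rightarrow> bool" where
  ret_bot: "\<not> (\<exists>a. eval a G) \<Longrightarrow> alg1_run \<psi>s G False"
| ret_top: "eval m G \<Longrightarrow>
     (\<forall>i < length \<psi>s. \<not> unsat_with (shared_vars \<psi>s) (\<psi>s ! i) m) \<Longrightarrow>
     alg1_run \<psi>s G True"
| step: "eval m G \<Longrightarrow>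
     (\<exists>i < length \<psi>s. unsat_with (shared_vars \<psi>s) (\<psi>s ! i) m) \<Longrightarrow>
     (\<forall>i < length \<psi>s. unsat_with (shared_vars \<psi>s) (\<psi>s ! i) m \<longrightarrow>
         is_interpolant (shared_vars \<psi>s) (\<psi>s ! i) m (I i)) \<Longrightarrow>
     alg1_run \<psi>s (round_update \<psi>s m I G) r \<Longrightarrow>
     alg1_run \<psi>s G r"

end

theory Submission
  imports Defs
begin

text \<open>
  Returning \<bottom> is sound because of the invariant "\<phi> entails G": it holds for
  G = \<top>, and every round only conjoins interpolants I for \<not>(\<psi>_i \<and> m), each of
  which is entailed by \<psi>_i and hence by \<phi>.  So if G becomes unsatisfiable,
  so is \<phi>.

  Returning \<top> is sound because, when every \<psi>_i \<and> m is satisfiable, the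
  models A_i of the \<psi>_i all agree with m on the shared variables V; models
  that agree on all variables two components have in common can be glued
  into one assignment satisfying every \<psi>_i, hence \<phi>.
\<close>

lemma sat_cnf_cong:
  assumes "\<And>v. v \<in> cvars \<psi> \<Longrightarrow> a v = b v"
  shows "sat_cnf a \<psi> = sat_cnf b \<psi>"
proof -
  have "sat_clause a c = sat_clause b c" if "c \<in> set \<psi>" for c
  proof -
    have "a v = b v" if "(v, p) \<in> set c" for v p
      using assms \<open>c \<in> set \<psi>\<close> that unfolding cvars_def by force
    then show ?thesis unfolding sat_clause_def by auto
  qed
  then show ?thesis unfolding sat_cnf_def by auto
qed

text \<open>If each component \<psi>_i has a model A i, and any two of these models agree on
  the variables their components share, then one assignment satisfies all
  components: give each variable the value of the model of some component
  containing it.\<close>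

lemma glue_compatible_models:
  assumes models: "\<And>i. i < length \<psi>s \<Longrightarrow> sat_cnf (A i) (\<psi>s ! i)"
    and compatible: "\<And>i j v. \<lbrakk>i < length \<psi>s; j < length \<psi>s;
                               v \<in> cvars (\<psi>s ! i); v \<in> cvars (\<psi>s ! j)\<rbrakk> \<Longrightarrow> A i v = A j v"
  shows "\<exists>a. \<forall>i < length \<psi>s. sat_cnf a (\<psi>s ! i)"
proof -
  define owner where "owner v = (SOME i. i < length \<psi>s \<and> v \<in> cvars (\<psi>s ! i))" for v
  define a where "a v = A (owner v) v" for v
  have "sat_cnf a (\<psi>s ! i)" if i: "i < length \<psi>s" for i
  proof -
    have "a v = A i v" if v: "v \<in> cvars (\<psi>s ! i)" for v
    proof -
      have "owner v < length \<psi>s \<and> v \<in> cvars (\<psi>s ! owner v)"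
        unfolding owner_def by (rule someI) (use i v in blast)
      then show ?thesis unfolding a_def using compatible i v by blast
    qed
    then show ?thesis using models[OF i] sat_cnf_cong by metis
  qed
  then show ?thesis by blast
qed

lemma shared_varsI:
  assumes "i < length \<psi>s" "j < length \<psi>s" "i \<noteq> j"
    and "v \<in> cvars (\<psi>s ! i)" "v \<in> cvars (\<psi>s ! j)"
  shows "v \<in> shared_vars \<psi>s"
  using assms unfolding shared_vars_def by fastforce

text \<open>If every \<psi>_i \<and> m is satisfiable, the conjunction of the \<psi>_i is satisfiable:
  models agreeing with m on V are pairwise compatible.\<close>

lemma locally_consistent_imp_sat:
  assumes "\<forall>i < length \<psi>s. \<not> unsat_with (shared_vars \<psi>s) (\<psi>s ! i) m"
  shows "\<exists>a. \<forall>i < length \<psi>s. sat_cnf a (\<psi>s ! i)"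
proof -
  obtain A where A: "\<And>i. i < length \<psi>s \<Longrightarrow>
      (\<forall>v \<in> shared_vars \<psi>s. A i v = m v) \<and> sat_cnf (A i) (\<psi>s ! i)"
    using assms unfolding unsat_with_def by metis
  show ?thesis
  proof (rule glue_compatible_models)
    show "sat_cnf (A i) (\<psi>s ! i)" if "i < length \<psi>s" for i
      using A[OF that] by blast
    show "A i v = A j v"
      if "i < length \<psi>s" "j < length \<psi>s" "v \<in> cvars (\<psi>s ! i)" "v \<in> cvars (\<psi>s ! j)"
      for i j v
      using that A shared_varsI[OF that(1,2) _ that(3,4)] by (cases "i = j") auto
  qed
qed

lemma eval_foldl_conjoin:
  "eval a (foldl (\<lambda>g i. if P i then FAnd g (I i) else g) G xs) \<longleftrightarrow>
     eval a G \<and> (\<forall>i \<in> set xs. P i \<longrightarrow> eval a (I i))"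
  by (induction xs arbitrary: G) auto

lemma eval_round_update:
  "eval a (round_update \<psi>s m I G) \<longleftrightarrow>
     eval a G \<and> (\<forall>i < length \<psi>s. unsat_with (shared_vars \<psi>s) (\<psi>s ! i) m \<longrightarrow> eval a (I i))"
  unfolding round_update_def eval_foldl_conjoin by auto

text \<open>Each interpolant is entailed by its component, hence by \<phi>; so a round
  preserves the invariant.\<close>

lemma round_update_preserves_entailment:
  assumes entails: "\<forall>a. sat_cnf a \<phi> \<longrightarrow> eval a G"
    and parts: "\<forall>i < length \<psi>s. set (\<psi>s ! i) \<subseteq> set \<phi>"
    and interpolants: "\<forall>i < length \<psi>s. unsat_with (shared_vars \<psi>s) (\<psi>s ! i) m \<longrightarrow>
         is_interpolant (shared_vars \<psi>s) (\<psi>s ! i) m (I i)"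
  shows "\<forall>a. sat_cnf a \<phi> \<longrightarrow> eval a (round_update \<psi>s m I G)"
proof (intro allI impI)
  fix a assume a: "sat_cnf a \<phi>"
  have "sat_cnf a (\<psi>s ! i)" if "i < length \<psi>s" for i
    using a parts that unfolding sat_cnf_def by blast
  then show "eval a (round_update \<psi>s m I G)"
    using entails a interpolants unfolding eval_round_update is_interpolant_def by blast
qed

lemma alg1_bot_sound:
  assumes "alg1_run \<psi>s G False"
    and "\<forall>i < length \<psi>s. set (\<psi>s ! i) \<subseteq> set \<phi>"
    and "\<forall>a. sat_cnf a \<phi> \<longrightarrow> eval a G"
  shows "\<not> satisfiable \<phi>"
  using assms
proof (induction \<psi>s G "False" rule: alg1_run.induct)
  case (ret_bot G \<psi>s)
  then show ?case unfolding satisfiable_def by blast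
next
  case (step m G \<psi>s I)
  then show ?case using round_update_preserves_entailment by blast
qed simp

lemma alg1_top_sound:
  assumes "alg1_run \<psi>s G True" and "is_decomposition \<phi> \<psi>s"
  shows "satisfiable \<phi>"
  using assms
proof (induction \<psi>s G "True" rule: alg1_run.induct)
  case (ret_top m G \<psi>s)
  then show ?case
    using locally_consistent_imp_sat[OF ret_top.hyps(2)]
    unfolding is_decomposition_def satisfiable_def by blast
qed simp_all

theorem mainTheorem2:
  fixes \<phi> :: "'v cnf" and \<psi>s :: "'v cnf list" and r :: bool
  assumes "is_decomposition \<phi> \<psi>s"
    and "alg1_run \<psi>s FTrue r"
  shows "(r \<longrightarrow> satisfiable \<phi>) \<and> (\<not> r \<longrightarrow> \<not> satisfiable \<phi>)"
proof (cases r)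
  case True
  then show ?thesis using alg1_top_sound assms by simp
next
  case False
  have "\<forall>i < length \<psi>s. set (\<psi>s ! i) \<subseteq> set \<phi>"
    using assms(1) unfolding is_decomposition_def by blast
  then show ?thesis using alg1_bot_sound assms(2) False by fastforce
qed

end
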